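(* Consider the coordination game described in the context in which each agent $i$ observes $z_i=A-\theta+\sigma_z\xi_i$ with $\xi_i\sim\mathcal{N}(0,1)$ i.i.d. across agents, and let $\alpha_z:=1/\sigma_z$. If $\alpha_z>\sqrt{2\pi}$, then there exist multiple (at least two distinct) equilibria.
   Context: A unit mass of agents $i\in[0,1]$ each choose $a_i\in\{0,1\}$ ($a_i=1$: attack the status quo). The aggregate attack is $A=\int_0^1 a_i\,di$. The status quo has strength $\theta\in\mathbb{R}$ and is abandoned iff $A>\theta$. An attacking agent pays cost $c\in(0,1)$ and gets $1$ if the status quo is abandoned, otherwise nothing; not attacking yields $0$, so agent $i$ maximizes $a_i\,(P(A-\theta>0\mid z_i)-c)$. Agents hold an (improper) uniform prior over $\theta$ on $\mathbb{R}$. Given a conjectured (measurable) aggregate attack function $A:\mathbb{R}\to[0,1]$, the posterior of an agent with signal $z$ is $P[\theta\in S\mid z,A(\cdot)]=\int_S \phi(\alpha_z(z-A(\theta)+\theta))\,d\theta\big/\int_{\mathbb{R}}\phi(\alpha_z(z-A(\theta)+\theta))\,d\theta$, with $\phi$ the standard normal density. An equilibrium is a function $A:\mathbb{R}\to[0,1]$ such that for every $\theta$, $A(\theta)$ equals the probability (mass of agents) that an agent's signal $z=A(\theta)-\theta+\sigma_z\xi$ leads him to attack, i.e. that $P[A(\theta')-\theta'>0\mid z,A(\cdot)]\ge c$ (where $\theta'$ is the random fundamental under the posterior). *)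

theory Defs
  imports "HOL-Probability.Probability"
begin

text \<open>Posterior probability that the status quo is abandoned (A(theta') - theta' > 0),
  for an agent with signal z, noise scale sigma (alpha_z = 1/sigma), under the conjectured
  aggregate attack function A and the improper uniform prior on theta'.\<close>
definition posterior_success :: "real \<Rightarrow> (real \<Rightarrow> real) \<Rightarrow> real \<Rightarrow> real" where
  "posterior_success \<sigma> A z =
     (\<integral>t. indicator {t. A t - t > 0} t * std_normal_density ((1/\<sigma>) * (z - A t + t)) \<partial>lborel)
     / (\<integral>t. std_normal_density ((1/\<sigma>) * (z - A t + t)) \<partial>lborel)"

text \<open>Set of standard-normal noise realisations xi for which an agent, facing fundamental theta
  (signal z = A theta - theta + sigma xi), attacks.\<close>
definition attack_set :: "real \<Rightarrow> real \<Rightarrow> (real \<Rightarrow> real) \<Rightarrow> real \<Rightarrow> real set" where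
  "attack_set \<sigma> c A \<theta> = {\<xi>. posterior_success \<sigma> A (A \<theta> - \<theta> + \<sigma> * \<xi>) \<ge> c}"

definition attack_mass :: "real \<Rightarrow> real \<Rightarrow> (real \<Rightarrow> real) \<Rightarrow> real \<Rightarrow> real" where
  "attack_mass \<sigma> c A \<theta> = measure (density lborel std_normal_density) (attack_set \<sigma> c A \<theta>)"

definition is_equilibrium :: "real \<Rightarrow> real \<Rightarrow> (real \<Rightarrow> real) \<Rightarrow> bool" where
  "is_equilibrium \<sigma> c A \<longleftrightarrow>
     A \<in> borel_measurable borel \<and>
     (\<forall>\<theta>. 0 \<le> A \<theta> \<and> A \<theta> \<le> 1) \<and>
     (\<forall>\<theta>. attack_set \<sigma> c A \<theta> \<in> sets borel \<and> A \<theta> = attack_mass \<sigma> c A \<theta>)"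

end

theory Submission
  imports Defs
begin

(* If every agent attacks iff z + k \<ge> 0, the mass attacking at state \<theta> is
   attack_share (A \<theta> - \<theta> + k), where attack_share u = P(\<xi> \<ge> - \<alpha> u).  So for any measurable
   right inverse v of state_of_offset u = attack_share u - u, the profile
   A \<theta> = attack_share (v (\<theta> - k)) satisfies A \<theta> - \<theta> = v (\<theta> - k) - k, and it is an equilibrium
   as soon as the threshold -k is a best response to it.  Under the flat prior the likelihood of
   the shifted state s = \<theta>' - k given w = z + k is \<phi>(\<alpha> (w - v s)), an exponential family in w;
   hence once the expected net gain of attacking vanishes at w = 0 it has the sign of w
   everywhere, and such a k exists by the intermediate value theorem.  When \<alpha> > sqrt (2 pi),
   attack_share has slope \<alpha> \<phi>(0) > 1 at 0, so state_of_offset is not injective: its largest and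
   smallest right inverses differ and give two distinct equilibria. *)

abbreviation std_normal :: "real measure"
  where "std_normal \<equiv> density lborel std_normal_density"

lemma std_normal_density_pos: "0 < std_normal_density x"
  by (rule normal_density_pos) simp

lemma std_normal_density_le_one: "std_normal_density x \<le> 1"
proof -
  have "exp (- x\<^sup>2 / 2) \<le> 1" by simp
  moreover have "1 \<le> sqrt (2 * pi)" using pi_gt3 by simp
  ultimately have "exp (- x\<^sup>2 / 2) \<le> sqrt (2 * pi)" by linarith
  then show ?thesis
    unfolding std_normal_density_def by (simp add: divide_le_eq_1)
qed

lemma std_normal_density_antimono_abs:
  assumes "\<bar>x\<bar> \<le> \<bar>y\<bar>"
  shows "std_normal_density y \<le> std_normal_density x"
  using assms unfolding std_normal_density_def abs_le_square_iff by (simp add: divide_right_mono)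

lemma std_normal_density_tilt:
  "std_normal_density (a * (w - u)) = exp (- a\<^sup>2 * w\<^sup>2 / 2) * exp (a\<^sup>2 * w * u) * std_normal_density (a * u)"
proof -
  have e: "- (a * (w - u))\<^sup>2 / 2 = - a\<^sup>2 * w\<^sup>2 / 2 + a\<^sup>2 * w * u + - (a * u)\<^sup>2 / 2"
    by (simp add: power2_eq_square field_simps)
  show ?thesis
    unfolding std_normal_density_def e exp_add by simp
qed

lemma std_normal_density_le_shifted:
  "std_normal_density x \<le> exp (d\<^sup>2 / 2) * std_normal_density ((x + d) / sqrt 2)"
proof -
  have "(x + d)\<^sup>2 \<le> 2 * x\<^sup>2 + 2 * d\<^sup>2"
    using sum_squares_ge_zero[of "x - d" 0] by (simp add: power2_eq_square algebra_simps)
  then have "- x\<^sup>2 / 2 \<le> d\<^sup>2 / 2 + - ((x + d) / sqrt 2)\<^sup>2 / 2"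
    by (simp add: power_divide)
  then have "exp (- x\<^sup>2 / 2) \<le> exp (d\<^sup>2 / 2) * exp (- ((x + d) / sqrt 2)\<^sup>2 / 2)"
    by (simp add: exp_add[symmetric])
  then show ?thesis
    unfolding std_normal_density_def by (simp add: divide_right_mono)
qed

lemma measure_std_normal:
  assumes "S \<in> sets borel"
  shows "measure std_normal S = (\<integral>x. std_normal_density x * indicator S x \<partial>lborel)"
proof -
  have "measure std_normal S = integral\<^sup>L std_normal (indicator S)"
    by simp
  also have "\<dots> = (\<integral>x. std_normal_density x * indicator S x \<partial>lborel)"
    using assms by (subst integral_density) auto
  finally show ?thesis .
qed

lemma measure_std_normal_Ico_le:
  assumes "l \<le> r"
  shows "measure std_normal {l..<r} \<le> r - l"
proof -
  have "measure std_normal {l..<r} = (\<integral>x. std_normal_density x * indicator {l..<r} x \<partial>lborel)"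
    by (rule measure_std_normal) simp
  also have "\<dots> \<le> (\<integral>x. indicator {l..<r} x \<partial>lborel)"
    by (intro integral_mono integrable_real_mult_indicator integrable_real_indicator)
       (auto simp: std_normal_density_le_one indicator_def assms)
  also have "\<dots> = r - l"
    using assms by simp
  finally show ?thesis .
qed

lemma measure_std_normal_Ico_ge:
  assumes "l \<le> r" and "\<And>x. l \<le> x \<Longrightarrow> x \<le> r \<Longrightarrow> m \<le> std_normal_density x"
  shows "(r - l) * m \<le> measure std_normal {l..<r}"
proof -
  have "(r - l) * m = (\<integral>x. m * indicator {l..<r} x \<partial>lborel)"
    using assms(1) by simp
  also have "\<dots> \<le> (\<integral>x. std_normal_density x * indicator {l..<r} x \<partial>lborel)"
    by (intro integral_mono integrable_real_mult_indicator integrable_mult_right integrable_real_indicator)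
       (auto simp: assms indicator_def)
  also have "\<dots> = measure std_normal {l..<r}"
    by (rule measure_std_normal[symmetric]) simp
  finally show ?thesis .
qed

lemma integral_pos_AE:
  fixes f :: "'a \<Rightarrow> real"
  assumes "integrable M f" and "AE x in M. 0 < f x" and "emeasure M (space M) \<noteq> 0"
  shows "0 < integral\<^sup>L M f"
proof -
  have "0 \<le> integral\<^sup>L M f"
    using assms(2) by (intro integral_nonneg_AE) (auto elim: AE_mp)
  moreover have "integral\<^sup>L M f \<noteq> 0"
  proof
    assume "integral\<^sup>L M f = 0"
    then have "AE x in M. f x = 0"
      using assms(1,2) by (subst integral_nonneg_eq_0_iff_AE[symmetric]) (auto elim: AE_mp)
    with assms(2) have "AE x in M. False"
      by eventually_elim simp
    then show False
      using assms(3) ae_filter_eq_bot_iff trivial_limit_def by metis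
  qed
  ultimately show ?thesis by simp
qed

lemma lborel_integral_shift:
  fixes f :: "real \<Rightarrow> real"
  shows "(\<integral>x. f (x - k) \<partial>lborel) = (\<integral>x. f x \<partial>lborel)"
  using lborel_integral_real_affine[of 1 "\<lambda>x. f (x - k)" k] by simp

lemma borel_measurable_antimono:
  fixes f :: "real \<Rightarrow> real"
  assumes "antimono f"
  shows "f \<in> borel_measurable borel"
proof -
  have "mono (\<lambda>x. - f x)"
    using assms by (simp add: antimono_def mono_def)
  then have "(\<lambda>x. - f x) \<in> borel_measurable borel"
    by (rule borel_measurable_mono)
  then have "(\<lambda>x. - (- f x)) \<in> borel_measurable borel"
    by measurable
  then show ?thesis by simp
qed

lemma tilted_gain_pos:
  fixes b c w x k :: real
  assumes "0 < c" "c < 1" "0 < b" "w \<noteq> 0" "x \<noteq> k"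
  shows "0 < w * ((of_bool (k < x) - c) * (exp (b * w * x) - exp (b * w * k)))"
proof -
  define P where "P = w * (exp (b * w * x) - exp (b * w * k))"
  define Q where "Q = of_bool (k < x) - c"
  have "0 < P \<longleftrightarrow> k < x"
    using assms(3,4) by (auto simp: P_def zero_less_mult_iff mult_less_cancel_left mult_le_0_iff zero_le_mult_iff)
  moreover have "P \<noteq> 0"
    using assms(3-5) by (simp add: P_def)
  moreover have "0 < Q \<longleftrightarrow> k < x" "Q \<noteq> 0"
    using assms(1,2) by (auto simp: Q_def)
  ultimately have "0 < Q * P"
    by (cases "k < x") (auto simp: zero_less_mult_iff)
  then show ?thesis
    by (simp add: P_def Q_def ac_simps)
qed

locale global_game =
  fixes \<sigma> c :: real
  assumes c_pos: "0 < c" and c_less_one: "c < 1" and \<sigma>_pos: "0 < \<sigma>"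
begin

definition \<alpha> :: real where "\<alpha> = 1 / \<sigma>"

lemma \<alpha>_pos: "0 < \<alpha>"
  using \<sigma>_pos by (simp add: \<alpha>_def)

definition attack_share :: "real \<Rightarrow> real" where
  "attack_share u = measure std_normal {- \<alpha> * u..}"

definition state_of_offset :: "real \<Rightarrow> real" where
  "state_of_offset u = attack_share u - u"

lemma attack_share_nonneg: "0 \<le> attack_share u"
  by (simp add: attack_share_def)

lemma attack_share_le_one: "attack_share u \<le> 1"
proof -
  interpret prob_space std_normal
    by (rule prob_space_normal_density) simp
  show ?thesis by (simp add: attack_share_def)
qed

lemma attack_share_diff:
  assumes "a \<le> b"
  shows "attack_share b - attack_share a = measure std_normal {- \<alpha> * b..<- \<alpha> * a}"
proof -
  interpret prob_space std_normal
    by (rule prob_space_normal_density) simp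
  have "- \<alpha> * b \<le> - \<alpha> * a"
    using assms \<alpha>_pos by simp
  then have "{- \<alpha> * b..} = {- \<alpha> * b..<- \<alpha> * a} \<union> {- \<alpha> * a..}"
    by (rule ivl_disj_un_one(8)[symmetric])
  then show ?thesis
    by (simp add: attack_share_def measure_Union ivl_disj_int)
qed

lemma attack_share_lipschitz: "\<alpha>-lipschitz_on UNIV attack_share"
proof (rule lipschitz_onI)
  have le: "dist (attack_share a) (attack_share b) \<le> \<alpha> * dist a b" if "a \<le> b" for a b
    using attack_share_diff[OF that] measure_std_normal_Ico_le[of "- \<alpha> * b" "- \<alpha> * a"] that \<alpha>_pos
    by (simp add: dist_real_def mult_left_mono algebra_simps)
  show "dist (attack_share x) (attack_share y) \<le> \<alpha> * dist x y" for x y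
    by (metis le le_cases dist_commute)
qed (use \<alpha>_pos in simp)

lemma continuous_attack_share: "continuous_on UNIV attack_share"
  using attack_share_lipschitz by (rule lipschitz_on_continuous_on)

lemma attack_share_measurable[measurable]: "attack_share \<in> borel_measurable borel"
  using continuous_attack_share by (rule borel_measurable_continuous_onI)

lemma strict_mono_attack_share: "strict_mono attack_share"
proof (rule strict_monoI)
  fix a b :: real
  assume "a < b"
  define M where "M = \<alpha> * (\<bar>a\<bar> + \<bar>b\<bar>)"
  have "(- \<alpha> * a - - \<alpha> * b) * std_normal_density M \<le> measure std_normal {- \<alpha> * b ..< - \<alpha> * a}"
  proof (rule measure_std_normal_Ico_ge)
    show "- \<alpha> * b \<le> - \<alpha> * a"
      using \<open>a < b\<close> \<alpha>_pos by simp
    fix x assume "- \<alpha> * b \<le> x" "x \<le> - \<alpha> * a"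
    moreover have "\<alpha> * (- a) \<le> \<alpha> * \<bar>a\<bar>" "\<alpha> * b \<le> \<alpha> * \<bar>b\<bar>" "0 \<le> \<alpha> * \<bar>a\<bar>" "0 \<le> \<alpha> * \<bar>b\<bar>"
      using \<alpha>_pos by (intro mult_left_mono mult_nonneg_nonneg; simp)+
    ultimately have "\<bar>x\<bar> \<le> M"
      unfolding M_def distrib_left by linarith
    then show "std_normal_density M \<le> std_normal_density x"
      by (intro std_normal_density_antimono_abs) simp
  qed
  moreover have "0 < (- \<alpha> * a - - \<alpha> * b) * std_normal_density M"
    using \<open>a < b\<close> \<alpha>_pos std_normal_density_pos by (simp add: algebra_simps)
  ultimately show "attack_share a < attack_share b"
    using attack_share_diff[of a b] \<open>a < b\<close> by simp
qed

lemma continuous_state_of_offset: "continuous_on S state_of_offset"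
  unfolding state_of_offset_def
  by (intro continuous_intros continuous_on_subset[OF continuous_attack_share]) simp

lemma state_of_offset_bounds: "- u \<le> state_of_offset u" "state_of_offset u \<le> 1 - u"
  using attack_share_nonneg[of u] attack_share_le_one[of u] by (simp_all add: state_of_offset_def)

lemma state_of_offset_steep:
  assumes "sqrt (2 * pi) < \<alpha>"
  shows "\<exists>h>0. state_of_offset 0 < state_of_offset h"
proof -
  have "isCont (\<lambda>x. 1 / sqrt (2 * pi) * exp (- x\<^sup>2 / 2)) 0"
    by (intro continuous_intros) simp
  then have "(std_normal_density \<longlongrightarrow> std_normal_density 0) (at_right 0)"
    unfolding std_normal_density_def isCont_def by (auto intro: tendsto_mono at_le)
  moreover have "1 / \<alpha> < std_normal_density 0"
    using assms \<alpha>_pos by (simp add: std_normal_density_def field_simps)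
  ultimately have "\<forall>\<^sub>F x in at_right 0. 1 / \<alpha> < std_normal_density x"
    by (rule order_tendstoD)
  then obtain x where "0 < x" and x: "1 / \<alpha> < std_normal_density x"
    unfolding eventually_at_right_field using field_lbound_gt_zero by force
  define h where "h = x / \<alpha>"
  have "(0 - - x) * std_normal_density x \<le> measure std_normal {- x ..< 0}"
    using \<open>0 < x\<close> by (intro measure_std_normal_Ico_ge std_normal_density_antimono_abs) auto
  then have "h < measure std_normal {- \<alpha> * h ..< - \<alpha> * 0}"
    using mult_strict_left_mono[OF x \<open>0 < x\<close>] \<alpha>_pos by (simp add: h_def)
  also have "\<dots> = attack_share h - attack_share 0"
    using attack_share_diff[of 0 h] \<open>0 < x\<close> \<alpha>_pos by (simp add: h_def)
  finally show ?thesis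
    using \<open>0 < x\<close> \<alpha>_pos by (intro exI[of _ h]) (simp add: h_def state_of_offset_def)
qed

lemma offset_above:
  assumes "s \<le> state_of_offset p"
  shows "\<exists>u\<ge>p. state_of_offset u = s"
proof -
  have "state_of_offset (max p (1 - s)) \<le> s"
    using state_of_offset_bounds(2)[of "max p (1 - s)"] by linarith
  from IVT2'[OF this assms max.cobounded1 continuous_state_of_offset] show ?thesis
    by auto
qed

lemma offset_below:
  assumes "state_of_offset p \<le> s"
  shows "\<exists>u\<le>p. state_of_offset u = s"
proof -
  have "s \<le> state_of_offset (min p (- s))"
    using state_of_offset_bounds(1)[of "min p (- s)"] by linarith
  from IVT2'[OF assms this min.cobounded1 continuous_state_of_offset] show ?thesis
    by auto
qed

definition offsets :: "real \<Rightarrow> real set" where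
  "offsets s = {u. state_of_offset u = s}"

lemma offsets_nonempty: "offsets s \<noteq> {}"
  using offset_above[of s "- s"] state_of_offset_bounds(1)[of "- s"] by (auto simp: offsets_def)

lemma closed_offsets: "closed (offsets s)"
  unfolding offsets_def by (rule closed_Collect_eq) (auto intro: continuous_state_of_offset)

lemma offsets_subset: "offsets s \<subseteq> {- s..1 - s}"
proof
  fix u assume "u \<in> offsets s"
  then show "u \<in> {- s..1 - s}"
    using state_of_offset_bounds[of u] by (simp add: offsets_def)
qed

definition max_offset :: "real \<Rightarrow> real" where
  "max_offset s = Sup (offsets s)"

definition min_offset :: "real \<Rightarrow> real" where
  "min_offset s = Inf (offsets s)"

lemma bdd_offsets: "bdd_above (offsets s)" "bdd_below (offsets s)"
  using bdd_above_mono[OF bdd_above_Icc offsets_subset] bdd_below_mono[OF bdd_below_Icc offsets_subset]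
  by auto

lemma state_of_max_offset: "state_of_offset (max_offset s) = s"
  using closed_contains_Sup[OF offsets_nonempty bdd_offsets(1) closed_offsets]
  by (simp add: max_offset_def offsets_def)

lemma state_of_min_offset: "state_of_offset (min_offset s) = s"
  using closed_contains_Inf[OF offsets_nonempty bdd_offsets(2) closed_offsets]
  by (simp add: min_offset_def offsets_def)

lemma le_max_offset: "state_of_offset u = s \<Longrightarrow> u \<le> max_offset s"
  unfolding max_offset_def by (rule cSup_upper[OF _ bdd_offsets(1)]) (simp add: offsets_def)

lemma min_offset_le: "state_of_offset u = s \<Longrightarrow> min_offset s \<le> u"
  unfolding min_offset_def by (rule cInf_lower[OF _ bdd_offsets(2)]) (simp add: offsets_def)

lemma antimono_max_offset: "antimono max_offset"
proof (rule antimonoI)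
  fix s s' :: real
  assume "s \<le> s'"
  then obtain u where "max_offset s' \<le> u" "state_of_offset u = s"
    using offset_above[of s "max_offset s'"] state_of_max_offset[of s'] by auto
  then show "max_offset s' \<le> max_offset s"
    using le_max_offset[of u s] by linarith
qed

lemma antimono_min_offset: "antimono min_offset"
proof (rule antimonoI)
  fix s s' :: real
  assume "s \<le> s'"
  then obtain u where "u \<le> min_offset s" "state_of_offset u = s'"
    using offset_below[of "min_offset s" s'] state_of_min_offset[of s] by auto
  then show "min_offset s' \<le> min_offset s"
    using min_offset_le[of u s'] by linarith
qed

lemma min_offset_less_max_offset:
  assumes "sqrt (2 * pi) < \<alpha>"
  shows "min_offset (state_of_offset 0) < max_offset (state_of_offset 0)"
proof -
  obtain h where "0 < h" "state_of_offset 0 < state_of_offset h"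
    using state_of_offset_steep[OF assms] by blast
  then obtain u where "h \<le> u" "state_of_offset u = state_of_offset 0"
    using offset_above[of "state_of_offset 0" h] by auto
  then show ?thesis
    using \<open>0 < h\<close> min_offset_le[of 0] le_max_offset[of u] by fastforce
qed

definition threshold_profile :: "(real \<Rightarrow> real) \<Rightarrow> real \<Rightarrow> real \<Rightarrow> real" where
  "threshold_profile v k \<theta> = attack_share (v (\<theta> - k))"

lemma threshold_profiles_differ:
  assumes "\<And>s. state_of_offset (v s) = s" "\<And>s. state_of_offset (v' s) = s" and "v s\<^sub>0 \<noteq> v' s\<^sub>0"
  shows "threshold_profile v k \<noteq> threshold_profile v' k'"
proof
  assume "threshold_profile v k = threshold_profile v' k'"
  then have eq: "v (\<theta> - k) = v' (\<theta> - k')" for \<theta>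
    using strict_mono_eq[OF strict_mono_attack_share] by (metis threshold_profile_def)
  have "k = k'"
    using arg_cong[OF eq[of 0], of state_of_offset] assms(1,2) by simp
  then show False
    using eq[of "s\<^sub>0 + k"] assms(3) by simp
qed

end

locale offset_selection = global_game +
  fixes v :: "real \<Rightarrow> real"
  assumes state_of_v: "\<And>s. state_of_offset (v s) = s"
    and v_measurable[measurable]: "v \<in> borel_measurable borel"
begin

lemma v_bounds: "- s \<le> v s" "v s \<le> 1 - s"
  using state_of_offset_bounds[of "v s"] state_of_v[of s] by simp_all

lemma AE_v_neq: "AE s in lborel. v s \<noteq> k"
  using AE_lborel_singleton[of "state_of_offset k"] by eventually_elim (use state_of_v in auto)

lemma threshold_profile_minus_state: "threshold_profile v k \<theta> - \<theta> = v (\<theta> - k) - k"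
  using state_of_v[of "\<theta> - k"] by (simp add: threshold_profile_def state_of_offset_def)

lemma threshold_profile_measurable[measurable]: "threshold_profile v k \<in> borel_measurable borel"
  unfolding threshold_profile_def by measurable

definition likelihood :: "real \<Rightarrow> real \<Rightarrow> real" where
  "likelihood w s = std_normal_density (\<alpha> * (w - v s))"

lemma likelihood_pos: "0 < likelihood w s"
  by (simp add: likelihood_def std_normal_density_pos)

lemma likelihood_measurable[measurable]: "likelihood w \<in> borel_measurable borel"
  unfolding likelihood_def by measurable

lemma likelihood_tilt:
  "likelihood w s = exp (- \<alpha>\<^sup>2 * w\<^sup>2 / 2) * exp (\<alpha>\<^sup>2 * w * v s) * likelihood 0 s"
  unfolding likelihood_def std_normal_density_tilt[of \<alpha> w] by (simp add: std_normal_density_def)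

lemma integrable_likelihood: "integrable lborel (likelihood w)"
  \<comment> \<open>0 \<le> v s + s \<le> 1, so a Gaussian in s dominates the likelihood.\<close>
proof (rule Bochner_Integration.integrable_bound)
  show "integrable lborel (\<lambda>s. exp (\<alpha>\<^sup>2 / 2) * std_normal_density (\<alpha> * w / sqrt 2 + \<alpha> / sqrt 2 * s))"
    using \<alpha>_pos by (intro integrable_mult_right lborel_integrable_real_affine integrable_normal_density) auto
  show "AE s in lborel. norm (likelihood w s)
      \<le> norm (exp (\<alpha>\<^sup>2 / 2) * std_normal_density (\<alpha> * w / sqrt 2 + \<alpha> / sqrt 2 * s))"
  proof (rule AE_I2)
    fix s
    let ?y = "\<alpha> * w / sqrt 2 + \<alpha> / sqrt 2 * s"
    have "0 \<le> \<alpha> * (v s + s)" "\<alpha> * (v s + s) \<le> \<alpha>"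
      using v_bounds[of s] \<alpha>_pos by (simp_all add: mult_left_le)
    then have exp_le: "exp ((\<alpha> * (v s + s))\<^sup>2 / 2) \<le> exp (\<alpha>\<^sup>2 / 2)"
      by (simp add: power_mono)
    have "(\<alpha> * (w - v s) + \<alpha> * (v s + s)) / sqrt 2 = ?y"
      by (simp add: field_simps)
    then have "likelihood w s \<le> exp ((\<alpha> * (v s + s))\<^sup>2 / 2) * std_normal_density ?y"
      using std_normal_density_le_shifted[of "\<alpha> * (w - v s)" "\<alpha> * (v s + s)"]
      by (simp add: likelihood_def)
    also have "\<dots> \<le> exp (\<alpha>\<^sup>2 / 2) * std_normal_density ?y"
      using exp_le std_normal_density_pos[of ?y] by (simp add: mult_right_mono)
    finally show "norm (likelihood w s) \<le> norm (exp (\<alpha>\<^sup>2 / 2) * std_normal_density ?y)"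
      using likelihood_pos[of w s] std_normal_density_pos[of ?y] by simp
  qed
qed simp

lemma integral_likelihood_pos: "0 < (\<integral>s. likelihood w s \<partial>lborel)"
  by (rule integral_pos_AE) (simp_all add: integrable_likelihood likelihood_pos)

definition net_gain :: "real \<Rightarrow> real \<Rightarrow> real" where
  "net_gain k w = (\<integral>s. (indicator {s. k < v s} s - c) * likelihood w s \<partial>lborel)"

lemma gain_factor_bounded: "\<bar>indicator {s. k < v s} s - c\<bar> \<le> 1"
  using c_pos c_less_one by (simp add: indicator_def)

lemma integrable_net_gain:
  "integrable lborel (\<lambda>s. (indicator {s. k < v s} s - c) * likelihood w s)"
proof (rule Bochner_Integration.integrable_bound[OF integrable_likelihood])
  show "AE s in lborel. norm ((indicator {s. k < v s} s - c) * likelihood w s) \<le> norm (likelihood w s)"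
    using gain_factor_bounded likelihood_pos by (simp add: abs_mult mult_left_le_one_le less_imp_le)
qed simp

lemma posterior_success_threshold_profile:
  "posterior_success \<sigma> (threshold_profile v k) z =
     (\<integral>s. indicator {s. k < v s} s * likelihood (z + k) s \<partial>lborel) / (\<integral>s. likelihood (z + k) s \<partial>lborel)"
proof -
  have arg: "1 / \<sigma> * (z - threshold_profile v k t + t) = \<alpha> * (z + k - v (t - k))" for t
  proof -
    have "z - threshold_profile v k t + t = z + k - v (t - k)"
      using threshold_profile_minus_state[of k t] by linarith
    then show ?thesis by (simp add: \<alpha>_def)
  qed
  have "(\<integral>t. indicator {t. threshold_profile v k t - t > 0} t
            * std_normal_density (1 / \<sigma> * (z - threshold_profile v k t + t)) \<partial>lborel)
      = (\<integral>t. indicator {s. k < v s} (t - k) * likelihood (z + k) (t - k) \<partial>lborel)"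
    unfolding arg
    by (intro Bochner_Integration.integral_cong)
       (simp_all add: likelihood_def threshold_profile_minus_state indicator_def)
  moreover have "(\<integral>t. std_normal_density (1 / \<sigma> * (z - threshold_profile v k t + t)) \<partial>lborel)
      = (\<integral>t. likelihood (z + k) (t - k) \<partial>lborel)"
    unfolding arg likelihood_def ..
  ultimately show ?thesis
    unfolding posterior_success_def
    using lborel_integral_shift[of "\<lambda>s. indicator {s. k < v s} s * likelihood (z + k) s" k]
      lborel_integral_shift[of "likelihood (z + k)" k]
    by simp
qed

lemma attacks_iff_net_gain_nonneg:
  "c \<le> posterior_success \<sigma> (threshold_profile v k) z \<longleftrightarrow> 0 \<le> net_gain k (z + k)"
proof -
  have "net_gain k (z + k) = (\<integral>s. indicator {s. k < v s} s * likelihood (z + k) s \<partial>lborel)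
      - c * (\<integral>s. likelihood (z + k) s \<partial>lborel)"
    unfolding net_gain_def left_diff_distrib
    by (simp add: integrable_likelihood integrable_real_mult_indicator mult.commute[of "indicator _ _"])
  then show ?thesis
    unfolding posterior_success_threshold_profile
    using integral_likelihood_pos[of "z + k"] by (simp add: le_divide_eq)
qed

lemma net_gain_sign:
  assumes "net_gain k 0 = 0" and "w \<noteq> 0"
  shows "0 < w * net_gain k w"
proof -
  \<comment> \<open>Subtracting E times net_gain k 0 = 0 makes the tilted integrand vanish where v s = k
    and have the sign of w elsewhere.\<close>
  define E where "E = exp (- \<alpha>\<^sup>2 * w\<^sup>2 / 2) * exp (\<alpha>\<^sup>2 * w * k)"
  let ?g = "\<lambda>s. indicator {s. k < v s} s - c"
  have "w * net_gain k w = w * (net_gain k w - E * net_gain k 0)"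
    using assms(1) by simp
  also have "\<dots> = (\<integral>s. w * (?g s * likelihood w s - E * (?g s * likelihood 0 s)) \<partial>lborel)"
    unfolding net_gain_def by (simp add: integrable_net_gain)
  also have "0 < \<dots>"
  proof (rule integral_pos_AE)
    show "integrable lborel (\<lambda>s. w * (?g s * likelihood w s - E * (?g s * likelihood 0 s)))"
      by (simp add: integrable_net_gain)
    show "AE s in lborel. 0 < w * (?g s * likelihood w s - E * (?g s * likelihood 0 s))"
      using AE_v_neq[of k]
    proof eventually_elim
      case (elim s)
      have "w * (?g s * likelihood w s - E * (?g s * likelihood 0 s))
          = exp (- \<alpha>\<^sup>2 * w\<^sup>2 / 2) * likelihood 0 s
            * (w * ((of_bool (k < v s) - c) * (exp (\<alpha>\<^sup>2 * w * v s) - exp (\<alpha>\<^sup>2 * w * k))))"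
        by (subst likelihood_tilt) (simp add: E_def indicator_def algebra_simps)
      moreover have "0 < w * ((of_bool (k < v s) - c) * (exp (\<alpha>\<^sup>2 * w * v s) - exp (\<alpha>\<^sup>2 * w * k)))"
        using tilted_gain_pos[OF c_pos c_less_one _ assms(2) elim] \<alpha>_pos by simp
      ultimately show ?case
        using likelihood_pos[of 0 s] by (metis exp_gt_zero mult_pos_pos)
    qed
  qed simp
  finally show ?thesis .
qed

lemma net_gain_nonneg_iff:
  assumes "net_gain k 0 = 0"
  shows "0 \<le> net_gain k w \<longleftrightarrow> 0 \<le> w"
  using net_gain_sign[OF assms, of w] assms by (cases "w = 0") (auto simp: zero_less_mult_iff)

lemma net_gain_tendsto:
  assumes [measurable]: "S \<in> sets borel"
    and "AE s in lborel. \<forall>\<^sub>F n in sequentially. (k n < v s) = (s \<in> S)"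
  shows "(\<lambda>n. net_gain (k n) w) \<longlonglongrightarrow> (\<integral>s. (indicator S s - c) * likelihood w s \<partial>lborel)"
  unfolding net_gain_def
proof (rule integral_dominated_convergence[where w = "likelihood w"])
  show "AE s in lborel. norm ((indicator {s. k n < v s} s - c) * likelihood w s) \<le> likelihood w s" for n
    using gain_factor_bounded likelihood_pos
    by (simp add: abs_mult mult_left_le_one_le less_imp_le)
  show "AE s in lborel. (\<lambda>n. (indicator {s. k n < v s} s - c) * likelihood w s)
      \<longlonglongrightarrow> (indicator S s - c) * likelihood w s"
    using assms(2)
  proof eventually_elim
    case (elim s)
    then show ?case
      by (rule tendsto_eventually[OF eventually_mono]) (simp add: indicator_def)
  qed
qed (simp_all add: integrable_likelihood)

lemma isCont_net_gain: "isCont (\<lambda>k. net_gain k w) k\<^sub>0"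
proof (rule continuous_at_sequentiallyI)
  fix k :: "nat \<Rightarrow> real"
  assume k: "k \<longlonglongrightarrow> k\<^sub>0"
  have "AE s in lborel. \<forall>\<^sub>F n in sequentially. (k n < v s) = (s \<in> {s. k\<^sub>0 < v s})"
    using AE_v_neq[of k\<^sub>0]
  proof eventually_elim
    case (elim s)
    then consider "k\<^sub>0 < v s" | "v s < k\<^sub>0"
      by linarith
    then show ?case
      by cases (auto elim: eventually_mono[OF order_tendstoD(2)[OF k]] eventually_mono[OF order_tendstoD(1)[OF k]])
  qed
  then show "(\<lambda>n. net_gain (k n) w) \<longlonglongrightarrow> net_gain k\<^sub>0 w"
    unfolding net_gain_def[of k\<^sub>0] by (intro net_gain_tendsto) simp_all
qed

lemma net_gain_at_top: "(\<lambda>n. net_gain (real n) w) \<longlonglongrightarrow> - c * (\<integral>s. likelihood w s \<partial>lborel)"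
proof -
  have "AE s in lborel. \<forall>\<^sub>F n in sequentially. (real n < v s) = (s \<in> {})"
  proof (rule AE_I2)
    fix s
    have "\<forall>\<^sub>F n in sequentially. v s < real n"
      using filterlim_real_sequentially by (simp add: filterlim_at_top_dense)
    then show "\<forall>\<^sub>F n in sequentially. (real n < v s) = (s \<in> {})"
      by eventually_elim simp
  qed
  from net_gain_tendsto[OF _ this] show ?thesis
    by simp
qed

lemma net_gain_at_bot: "(\<lambda>n. net_gain (- real n) w) \<longlonglongrightarrow> (1 - c) * (\<integral>s. likelihood w s \<partial>lborel)"
proof -
  have "AE s in lborel. \<forall>\<^sub>F n in sequentially. (- real n < v s) = (s \<in> UNIV)"
  proof (rule AE_I2)
    fix s
    have "\<forall>\<^sub>F n in sequentially. - v s < real n"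
      using filterlim_real_sequentially by (simp add: filterlim_at_top_dense)
    then show "\<forall>\<^sub>F n in sequentially. (- real n < v s) = (s \<in> UNIV)"
      by eventually_elim simp
  qed
  from net_gain_tendsto[OF _ this] show ?thesis
    by simp
qed

lemma net_gain_root: "\<exists>k. net_gain k 0 = 0"
proof -
  have "\<forall>\<^sub>F n in sequentially. net_gain (real n) 0 < 0 \<and> 0 < net_gain (- real n) 0"
    using order_tendstoD(2)[OF net_gain_at_top] order_tendstoD(1)[OF net_gain_at_bot]
      integral_likelihood_pos[of 0] c_pos c_less_one
    by (intro eventually_conj) simp_all
  then obtain n where "net_gain (real n) 0 < 0" "0 < net_gain (- real n) 0"
    by (auto simp: eventually_sequentially)
  then show ?thesis
    using IVT2'[of "\<lambda>k. net_gain k 0" "real n" 0 "- real n"]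
    by (force intro: continuous_at_imp_continuous_on isCont_net_gain)
qed

lemma attack_set_threshold_profile:
  assumes "net_gain k 0 = 0"
  shows "attack_set \<sigma> c (threshold_profile v k) \<theta> = {- \<alpha> * v (\<theta> - k)..}"
proof -
  have "\<xi> \<in> attack_set \<sigma> c (threshold_profile v k) \<theta> \<longleftrightarrow> 0 \<le> v (\<theta> - k) + \<sigma> * \<xi>" for \<xi>
    unfolding attack_set_def
    by (simp add: attacks_iff_net_gain_nonneg net_gain_nonneg_iff[OF assms]
        threshold_profile_minus_state algebra_simps)
  also have "0 \<le> v (\<theta> - k) + \<sigma> * \<xi> \<longleftrightarrow> - \<alpha> * v (\<theta> - k) \<le> \<xi>" for \<xi>
    using \<sigma>_pos by (auto simp: \<alpha>_def field_simps)
  finally show ?thesis by auto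
qed

lemma is_equilibrium_threshold_profile:
  assumes "net_gain k 0 = 0"
  shows "is_equilibrium \<sigma> c (threshold_profile v k)"
  unfolding is_equilibrium_def attack_mass_def attack_set_threshold_profile[OF assms]
  by (simp add: threshold_profile_def attack_share_nonneg attack_share_le_one)
     (simp add: attack_share_def)

lemma ex_threshold_equilibrium: "\<exists>k. is_equilibrium \<sigma> c (threshold_profile v k)"
  using net_gain_root is_equilibrium_threshold_profile by blast

end

theorem proposition5:
  fixes \<sigma> c :: real
  assumes "0 < c" and "c < 1" and "0 < \<sigma>"
    and "1 / \<sigma> > sqrt (2 * pi)"
  shows "\<exists>A1 A2. A1 \<noteq> A2 \<and> is_equilibrium \<sigma> c A1 \<and> is_equilibrium \<sigma> c A2"
proof -
  interpret global_game \<sigma> c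
    using assms by unfold_locales
  interpret max: offset_selection \<sigma> c max_offset
    by unfold_locales (simp_all add: state_of_max_offset borel_measurable_antimono antimono_max_offset)
  interpret min: offset_selection \<sigma> c min_offset
    by unfold_locales (simp_all add: state_of_min_offset borel_measurable_antimono antimono_min_offset)
  obtain k k' where "is_equilibrium \<sigma> c (threshold_profile max_offset k)"
    and "is_equilibrium \<sigma> c (threshold_profile min_offset k')"
    using max.ex_threshold_equilibrium min.ex_threshold_equilibrium by blast
  moreover have "threshold_profile max_offset k \<noteq> threshold_profile min_offset k'"
    using min_offset_less_max_offset assms(4)
    by (intro threshold_profiles_differ[of _ _ "state_of_offset 0"])
       (simp_all add: \<alpha>_def state_of_max_offset state_of_min_offset)
  ultimately show ?thesis
    by blast
qed

end
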